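(* Let $\tau\in(V_{j-1},V_j)$ for some $1\le j\le n$, and $\chi\in\mathbb R$. If $i\ne j$ is an index with $\beta_i\neq\pm1$, then there is no $z_0\in[e^{V_{i-1}},e^{V_i}]$ such that $\lim_{z\to z_0} zS'_{\tau,\chi}(z)=0$ (limit taken over $z\in\mathbb C\setminus\mathbb R$).
   Context: Let $V_0<V_1<\dots<V_n$, $\beta_1,\dots,\beta_n\in[-1,1]$, $\beta_0:=-1$, $\beta_{n+1}:=1$, with $\beta_i\ne\beta_{i+1}$ for all $0\le i\le n$. Let $V:[V_0,V_n]\to\mathbb R$ be continuous and linear with slope $\beta_i$ on $[V_{i-1},V_i]$. For $\tau\in[V_0,V_n]$, $\chi\in\mathbb R$ and $z\in\mathbb C\setminus\mathbb R$ define $$S_{\tau,\chi}(z)=\int_{V_0}^{\tau}\tfrac12(1+V'(M))\ln(1-e^{M}z^{-1})\,dM-\int_{\tau}^{V_n}\tfrac12(1-V'(M))\ln(1-e^{-M}z)\,dM-\big(\chi-\tfrac12V(\tau)\big)\ln z,$$ with $\ln$ the principal branch. *)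

theory Defs
  imports "HOL-Analysis.Analysis"
begin

definition beta_ext :: "(nat \<Rightarrow> real) \<Rightarrow> nat \<Rightarrow> nat \<Rightarrow> real" where
  "beta_ext \<beta> n k = (if k = 0 then -1 else if k = Suc n then 1 else \<beta> k)"

text \<open>The function S_{tau,chi}(z); Vf is the piecewise linear function V,
  Vpts k is the breakpoint V_k, and V' is the derivative of Vf (defined a.e.).\<close>
definition S_fun :: "(nat \<Rightarrow> real) \<Rightarrow> nat \<Rightarrow> (real \<Rightarrow> real) \<Rightarrow> real \<Rightarrow> real \<Rightarrow> complex \<Rightarrow> complex" where
  "S_fun Vpts n Vf \<tau> chi z =
     integral {Vpts 0..\<tau>}
       (\<lambda>M. complex_of_real ((1 + deriv Vf M) / 2) * Ln (1 - complex_of_real (exp M) / z))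
   - integral {\<tau>..Vpts n}
       (\<lambda>M. complex_of_real ((1 - deriv Vf M) / 2) * Ln (1 - complex_of_real (exp (- M)) * z))
   - complex_of_real (chi - Vf \<tau> / 2) * Ln z"

end

theory Submission
  imports Defs
begin

text \<open>
  Put \<open>z = x + i\<epsilon>\<close> with \<open>exp V\<^sub>i\<^sub>-\<^sub>1 \<le> x \<le> exp V\<^sub>i\<close> and let \<open>\<epsilon> \<down> 0\<close>. Differentiating
  under the integral sign gives
  \<open>Im (z S'(z)) = \<epsilon> \<integral>\<^sub>\<tau>\<^sup>V\<^sup>n \<onehalf>(1 - V') P\<^sub>\<epsilon> - \<epsilon> \<integral>\<^sub>V\<^sub>0\<^sup>\<tau> \<onehalf>(1 + V') P\<^sub>\<epsilon>\<close> with
  \<open>P\<^sub>\<epsilon>(M) = exp M / ((x - exp M)\<^sup>2 + \<epsilon>\<^sup>2)\<close>, a Poisson kernel in the variable \<open>exp M\<close>.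
  The integral whose range contains the \<open>i\<close>-th piece is therefore at least
  \<open>\<onehalf>(1 \<plusminus> \<beta>\<^sub>i) arctan ((exp V\<^sub>i - exp V\<^sub>i\<^sub>-\<^sub>1) / 2) > 0\<close>, because \<open>x\<close> lies in the image
  of that piece, while the other one is \<open>O(\<epsilon>)\<close>, because \<open>\<tau>\<close> lies in a different piece and
  so \<open>x\<close> stays away from the image of its range. Hence \<open>Im (z S'(z))\<close> does not tend to \<open>0\<close>.
\<close>

text \<open>
  The weight \<open>a\<close> is kept apart from the kernel \<open>F\<close> because it is only piecewise constant:
  the Leibniz rule is applied on each piece and the pieces are glued together.
\<close>

definition integral_DERIV_on ::
  "complex set \<Rightarrow> (complex \<Rightarrow> real \<Rightarrow> complex) \<Rightarrow> (complex \<Rightarrow> real \<Rightarrow> complex)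
    \<Rightarrow> (real \<Rightarrow> real) \<Rightarrow> real \<Rightarrow> real \<Rightarrow> bool" where
  "integral_DERIV_on U F F' a p q \<longleftrightarrow> (\<forall>z\<in>U.
     (\<lambda>M. of_real (a M) * F z M) integrable_on {p..q} \<and>
     (\<lambda>M. of_real (a M) * F' z M) integrable_on {p..q} \<and>
     ((\<lambda>z. integral {p..q} (\<lambda>M. of_real (a M) * F z M)) has_field_derivative
        integral {p..q} (\<lambda>M. of_real (a M) * F' z M)) (at z))"

lemma integral_DERIV_on_combine:
  assumes "p \<le> q" "q \<le> r" "open U"
    and pq: "integral_DERIV_on U F F' a p q" and qr: "integral_DERIV_on U F F' a q r"
  shows "integral_DERIV_on U F F' a p r"
  unfolding integral_DERIV_on_def
proof (intro ballI conjI)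
  fix z assume z: "z \<in> U"
  have F_int: "(\<lambda>M. of_real (a M) * F w M) integrable_on {p..r}" if "w \<in> U" for w
    using assms that unfolding integral_DERIV_on_def
    by (meson Henstock_Kurzweil_Integration.integrable_combine)
  show "(\<lambda>M. of_real (a M) * F z M) integrable_on {p..r}"
    using F_int[OF z] .
  show F'_int: "(\<lambda>M. of_real (a M) * F' z M) integrable_on {p..r}"
    using assms z unfolding integral_DERIV_on_def
    by (meson Henstock_Kurzweil_Integration.integrable_combine)
  have "((\<lambda>w. integral {p..q} (\<lambda>M. of_real (a M) * F w M)
              + integral {q..r} (\<lambda>M. of_real (a M) * F w M)) has_field_derivative
       integral {p..q} (\<lambda>M. of_real (a M) * F' z M)
       + integral {q..r} (\<lambda>M. of_real (a M) * F' z M)) (at z)"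
    using pq qr z unfolding integral_DERIV_on_def by (intro DERIV_add) auto
  then show "((\<lambda>w. integral {p..r} (\<lambda>M. of_real (a M) * F w M)) has_field_derivative
      integral {p..r} (\<lambda>M. of_real (a M) * F' z M)) (at z)"
    using has_field_derivative_transform_within_open[OF _ \<open>open U\<close> z]
      Henstock_Kurzweil_Integration.integral_combine[OF assms(1,2) F_int]
      Henstock_Kurzweil_Integration.integral_combine[OF assms(1,2) F'_int] by simp
qed

lemma integral_DERIV_on_const_weight:
  assumes "p \<le> q" "open U" "convex U"
    and a: "\<And>M. M \<in> {p<..<q} \<Longrightarrow> a M = c"
    and F: "continuous_on (U \<times> {p..q}) (\<lambda>(z, M). F z M)"
    and F': "continuous_on (U \<times> {p..q}) (\<lambda>(z, M). F' z M)"
    and DERIV_F: "\<And>z M. z \<in> U \<Longrightarrow> ((\<lambda>z. F z M) has_field_derivative F' z M) (at z)"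
  shows "integral_DERIV_on U F F' a p q"
  unfolding integral_DERIV_on_def
proof (intro ballI conjI)
  fix z assume z: "z \<in> U"
  have weight_spike: "\<And>G. integral {p..q} (\<lambda>M. of_real (a M) * G M)
      = integral {p..q} (\<lambda>M. of_real c * G M)"
    by (rule integral_spike[OF negligible_finite[of "{p, q}"]]) (auto simp: a)
  have cont: "continuous_on {p..q} (G w)"
    if "continuous_on (U \<times> {p..q}) (\<lambda>(z, M). G z M)" "w \<in> U" for G w
    by (rule continuous_on_compose2[OF that(1), where f = "\<lambda>M. (w, M)", simplified])
       (use that(2) in \<open>auto intro!: continuous_intros\<close>)
  have F_int: "(\<lambda>M. of_real c * F w M) integrable_on {p..q}" if "w \<in> U" for w
    by (intro integrable_continuous_interval continuous_intros cont[OF F that])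
  have F'_int: "(\<lambda>M. of_real c * F' z M) integrable_on {p..q}"
    by (intro integrable_continuous_interval continuous_intros cont[OF F' z])
  show "(\<lambda>M. of_real (a M) * F z M) integrable_on {p..q}"
    by (rule integrable_spike_finite[where S="{p, q}", OF _ _ F_int[OF z]]) (auto simp: a)
  show "(\<lambda>M. of_real (a M) * F' z M) integrable_on {p..q}"
    by (rule integrable_spike_finite[where S="{p, q}", OF _ _ F'_int]) (auto simp: a)
  have "((\<lambda>w. integral (cbox p q) (\<lambda>M. of_real c * F w M)) has_field_derivative
       integral (cbox p q) (\<lambda>M. of_real c * F' z M)) (at z within U)"
  proof (rule leibniz_rule_field_derivative[OF _ _ _ z \<open>convex U\<close>])
    show "((\<lambda>w. of_real c * F w M) has_field_derivative of_real c * F' w M) (at w within U)"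
      if "w \<in> U" for w M
      using that by (intro DERIV_cmult has_field_derivative_at_within[OF DERIV_F])
    show "(\<lambda>M. of_real c * F w M) integrable_on cbox p q" if "w \<in> U" for w
      using F_int[OF that] by simp
    show "continuous_on (U \<times> cbox p q) (\<lambda>(w, M). of_real c * F' w M)"
      using continuous_on_mult[OF continuous_on_const F', of "of_real c"]
      by (simp add: split_def)
  qed
  then show "((\<lambda>w. integral {p..q} (\<lambda>M. of_real (a M) * F w M)) has_field_derivative
      integral {p..q} (\<lambda>M. of_real (a M) * F' z M)) (at z)"
    unfolding weight_spike using at_within_open[OF z \<open>open U\<close>] by simp
qed

lemma integral_DERIV_on_piecewise_const:
  assumes P: "\<And>k. k < m \<Longrightarrow> P k \<le> P (Suc k)"
    and a: "\<And>k M. k < m \<Longrightarrow> M \<in> {P k<..<P (Suc k)} \<Longrightarrow> a M = c k"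
    and U: "open U" "convex U"
    and F: "continuous_on (U \<times> UNIV) (\<lambda>(z, M). F z M)"
    and F': "continuous_on (U \<times> UNIV) (\<lambda>(z, M). F' z M)"
    and DERIV_F: "\<And>z M. z \<in> U \<Longrightarrow> ((\<lambda>z. F z M) has_field_derivative F' z M) (at z)"
  shows "integral_DERIV_on U F F' a (P 0) (P m)"
proof -
  have piece: "integral_DERIV_on U F F' a p q"
    if "p \<le> q" "\<And>M. M \<in> {p<..<q} \<Longrightarrow> a M = c'" for p q c'
    by (rule integral_DERIV_on_const_weight[OF that(1) U that(2)
          continuous_on_subset[OF F] continuous_on_subset[OF F'] DERIV_F]) auto
  show ?thesis
    using P a
  proof (induction m)
    case 0
    show ?case by (rule piece[where c'=0]) auto
  next
    case (Suc m)
    have "P 0 \<le> P m"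
      by (rule lift_Suc_mono_le_ivl[of "{..<m}"]) (use Suc.prems(1) in auto)
    moreover have "P m \<le> P (Suc m)"
      using Suc.prems(1) by simp
    moreover have "integral_DERIV_on U F F' a (P 0) (P m)"
      by (rule Suc.IH) (use Suc.prems in auto)
    moreover have "integral_DERIV_on U F F' a (P m) (P (Suc m))"
      by (rule piece[where c'="c m"]) (use Suc.prems in auto)
    ultimately show ?case
      by (rule integral_DERIV_on_combine[OF _ _ \<open>open U\<close>])
  qed
qed

lemma one_minus_of_real_div_notin_nonpos_Reals:
  assumes "0 < Im z" "0 < e"
  shows "1 - of_real e / z \<notin> \<real>\<^sub>\<le>\<^sub>0"
proof -
  have "0 < (Re z)\<^sup>2 + (Im z)\<^sup>2"
    using assms by (simp add: add_nonneg_pos)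
  then have "0 < Im (1 - of_real e / z)"
    using assms by (simp add: Im_divide power2_eq_square)
  then show ?thesis
    by (auto simp: complex_nonpos_Reals_iff)
qed

lemma one_minus_of_real_mult_notin_nonpos_Reals:
  assumes "0 < Im z" "0 < e"
  shows "1 - of_real e * z \<notin> \<real>\<^sub>\<le>\<^sub>0"
proof -
  have "Im (1 - of_real e * z) < 0"
    using assms by simp
  then show ?thesis
    by (auto simp: complex_nonpos_Reals_iff)
qed

lemma minus_of_real_nonzero_if_Im_pos: "0 < Im z \<Longrightarrow> z - of_real r \<noteq> 0"
  by (metis Im_complex_of_real eq_iff_diff_eq_0 less_irrefl)

definition log_left :: "complex \<Rightarrow> real \<Rightarrow> complex" where
  "log_left z M = Ln (1 - of_real (exp M) / z)"

definition log_left' :: "complex \<Rightarrow> real \<Rightarrow> complex" where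
  "log_left' z M = of_real (exp M) / (z * (z - of_real (exp M)))"

definition log_right :: "complex \<Rightarrow> real \<Rightarrow> complex" where
  "log_right z M = Ln (1 - of_real (exp (- M)) * z)"

definition log_right' :: "complex \<Rightarrow> real \<Rightarrow> complex" where
  "log_right' z M = 1 / (z - of_real (exp M))"

lemma continuous_on_log_left: "continuous_on ({z. 0 < Im z} \<times> UNIV) (\<lambda>(z, M). log_left z M)"
  unfolding log_left_def split_def
  by (intro continuous_intros) (auto dest: one_minus_of_real_div_notin_nonpos_Reals[of _ "exp _"])

lemma continuous_on_log_left': "continuous_on ({z. 0 < Im z} \<times> UNIV) (\<lambda>(z, M). log_left' z M)"
  unfolding log_left'_def split_def
  by (intro continuous_intros) (auto dest: minus_of_real_nonzero_if_Im_pos)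

lemma continuous_on_log_right: "continuous_on ({z. 0 < Im z} \<times> UNIV) (\<lambda>(z, M). log_right z M)"
  unfolding log_right_def split_def
  by (intro continuous_intros) (auto dest: one_minus_of_real_mult_notin_nonpos_Reals[of _ "exp _"])

lemma continuous_on_log_right': "continuous_on ({z. 0 < Im z} \<times> UNIV) (\<lambda>(z, M). log_right' z M)"
  unfolding log_right'_def split_def
  by (intro continuous_intros) (auto dest: minus_of_real_nonzero_if_Im_pos)

lemma log_left_has_field_derivative:
  assumes z: "0 < Im z"
  shows "((\<lambda>z. log_left z M) has_field_derivative log_left' z M) (at z)"
proof -
  define e :: complex where "e = of_real (exp M)"
  have "z \<noteq> 0" "z - e \<noteq> 0"
    using z minus_of_real_nonzero_if_Im_pos[OF z] by (auto simp: e_def)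
  have inner: "((\<lambda>z. 1 - e / z) has_field_derivative e / z\<^sup>2) (at z)"
    using \<open>z \<noteq> 0\<close> by (auto intro!: derivative_eq_intros simp: field_simps power2_eq_square)
  have "((\<lambda>z. Ln (1 - e / z)) has_field_derivative inverse (1 - e / z) * (e / z\<^sup>2)) (at z)"
    by (rule DERIV_chain2[OF has_field_derivative_Ln inner])
       (use one_minus_of_real_div_notin_nonpos_Reals[OF z, of "exp M"] in \<open>simp add: e_def\<close>)
  moreover have "inverse (1 - e / z) * (e / z\<^sup>2) = e / (z * (z - e))"
    using \<open>z \<noteq> 0\<close> \<open>z - e \<noteq> 0\<close> by (simp add: field_simps power2_eq_square)
  ultimately show ?thesis
    unfolding log_left_def log_left'_def e_def by simp
qed

lemma log_right_has_field_derivative: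
  assumes z: "0 < Im z"
  shows "((\<lambda>z. log_right z M) has_field_derivative log_right' z M) (at z)"
proof -
  define e :: complex where "e = of_real (exp (- M))"
  have e_inverse: "e * of_real (exp M) = 1"
    by (simp add: e_def exp_minus flip: of_real_mult)
  have "1 - e * z \<noteq> 0"
    using one_minus_of_real_mult_notin_nonpos_Reals[OF z, of "exp (- M)"] by (auto simp: e_def)
  have "((\<lambda>z. Ln (1 - e * z)) has_field_derivative inverse (1 - e * z) * (- e)) (at z)"
    by (rule DERIV_chain2[OF has_field_derivative_Ln])
       (use one_minus_of_real_mult_notin_nonpos_Reals[OF z, of "exp (- M)"] in
         \<open>auto intro!: derivative_eq_intros simp: e_def\<close>)
  moreover have "inverse (1 - e * z) * (- e) = 1 / (z - of_real (exp M))"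
    using \<open>1 - e * z \<noteq> 0\<close> minus_of_real_nonzero_if_Im_pos[OF z] e_inverse
    by (simp add: field_simps)
  ultimately show ?thesis
    unfolding log_right_def log_right'_def e_def by simp
qed

lemma integral_le_except_finite:
  fixes f g :: "real \<Rightarrow> real"
  assumes "f integrable_on S" "g integrable_on S" "finite B"
    and "\<And>M. M \<in> S - B \<Longrightarrow> f M \<le> g M"
  shows "integral S f \<le> integral S g"
proof -
  define f' where "f' M = (if M \<in> B then g M else f M)" for M
  have "integral S f = integral S f'"
    by (rule integral_spike[OF negligible_finite[OF assms(3)]]) (auto simp: f'_def)
  moreover have "f' integrable_on S"
    by (rule integrable_spike_finite[OF assms(3) _ assms(1)]) (auto simp: f'_def)
  then have "integral S f' \<le> integral S g"
    by (rule integral_le[OF _ assms(2)]) (use assms(4) in \<open>auto simp: f'_def\<close>)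
  ultimately show ?thesis
    by simp
qed

text \<open>
  \<open>\<epsilon> * poisson_exp x \<epsilon> M\<close> is, up to the factor \<open>\<pi>\<close>, the Poisson kernel of the upper
  half-plane at \<open>x + i\<epsilon>\<close>, evaluated at \<open>exp M\<close> and multiplied by the Jacobian \<open>exp M\<close>.
\<close>

definition poisson_exp :: "real \<Rightarrow> real \<Rightarrow> real \<Rightarrow> real" where
  "poisson_exp x \<epsilon> M = exp M / ((x - exp M)\<^sup>2 + \<epsilon>\<^sup>2)"

lemma poisson_exp_nonneg: "0 \<le> poisson_exp x \<epsilon> M"
  by (simp add: poisson_exp_def)

lemma Im_mult_log_left':
  assumes "0 < \<epsilon>"
  shows "Im (Complex x \<epsilon> * log_left' (Complex x \<epsilon>) M) = - \<epsilon> * poisson_exp x \<epsilon> M"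
proof -
  have "Complex x \<epsilon> \<noteq> 0" "Complex x \<epsilon> - of_real (exp M) \<noteq> 0"
    using assms minus_of_real_nonzero_if_Im_pos[of "Complex x \<epsilon>"] by (auto simp: complex_eq_iff)
  then have "Complex x \<epsilon> * log_left' (Complex x \<epsilon>) M
      = of_real (exp M) / (Complex x \<epsilon> - of_real (exp M))"
    by (simp add: log_left'_def field_simps)
  then show ?thesis
    by (simp add: Im_divide poisson_exp_def power2_eq_square)
qed

lemma Im_mult_log_right':
  "Im (Complex x \<epsilon> * log_right' (Complex x \<epsilon>) M) = - \<epsilon> * poisson_exp x \<epsilon> M"
  by (simp add: log_right'_def Im_divide poisson_exp_def power2_eq_square algebra_simps)

lemma has_integral_Im_mult:
  assumes I: "((\<lambda>M. of_real (a M) * G M) has_integral I) S"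
    and G: "\<And>M. Im (w * G M) = - \<epsilon> * k M" and "\<epsilon> \<noteq> 0"
  shows "((\<lambda>M. a M * k M) has_integral - Im (w * I) / \<epsilon>) S"
proof -
  define J where "J = Im (w * I)"
  have "((\<lambda>M. Im (w * (of_real (a M) * G M))) has_integral J) S"
    using has_integral_linear[OF has_integral_mult_right[OF I] bounded_linear_Im]
    by (simp add: o_def J_def)
  moreover have "Im (w * (of_real (a M) * G M)) = - \<epsilon> * (a M * k M)" for M
    using G[of M] by (simp add: mult.left_commute[of w])
  ultimately have "((\<lambda>M. - \<epsilon> * (a M * k M)) has_integral J) S"
    by simp
  from has_integral_mult_right[OF this, of "- 1 / \<epsilon>"] show ?thesis
    unfolding J_def[symmetric] using \<open>\<epsilon> \<noteq> 0\<close> by simp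
qed

lemma poisson_exp_has_integral:
  assumes "a \<le> b" "0 < \<epsilon>"
  shows "((\<lambda>M. \<epsilon> * poisson_exp x \<epsilon> M) has_integral
      arctan ((exp b - x) / \<epsilon>) - arctan ((exp a - x) / \<epsilon>)) {a..b}"
proof -
  have "((\<lambda>M. arctan ((exp M - x) / \<epsilon>)) has_real_derivative \<epsilon> * poisson_exp x \<epsilon> M) (at M)" for M
  proof -
    have "((\<lambda>M. arctan ((exp M - x) / \<epsilon>)) has_real_derivative
        inverse (1 + ((exp M - x) / \<epsilon>)\<^sup>2) * (exp M / \<epsilon>)) (at M)"
      using assms(2) by (auto intro!: derivative_eq_intros)
    moreover have "inverse (1 + ((exp M - x) / \<epsilon>)\<^sup>2) * (exp M / \<epsilon>) = \<epsilon> * poisson_exp x \<epsilon> M"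
      using assms(2) by (simp add: poisson_exp_def field_simps power2_eq_square)
    ultimately show ?thesis
      by simp
  qed
  then show ?thesis
    by (intro fundamental_theorem_of_calculus[OF assms(1)])
       (simp add: has_real_derivative_iff_has_vector_derivative[symmetric]
          has_field_derivative_at_within)
qed

lemma arctan_half_sum_le:
  assumes "0 \<le> P" "0 \<le> Q" "0 < \<epsilon>" "\<epsilon> \<le> 1"
  shows "arctan ((P + Q) / 2) \<le> arctan (P / \<epsilon>) + arctan (Q / \<epsilon>)"
proof -
  have "(P + Q) / 2 \<le> max P Q"
    by simp
  also have "max P Q \<le> max P Q / \<epsilon>"
    using assms by (simp add: le_divide_eq mult_left_le)
  also have "\<dots> = max (P / \<epsilon>) (Q / \<epsilon>)"
    using assms(3) by (simp add: max_divide_distrib_right)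
  finally have "arctan ((P + Q) / 2) \<le> max (arctan (P / \<epsilon>)) (arctan (Q / \<epsilon>))"
    by (simp add: arctan_le_iff le_max_iff_disj)
  moreover have "0 \<le> arctan (P / \<epsilon>)" "0 \<le> arctan (Q / \<epsilon>)"
    using assms arctan_le_iff[of 0] by simp_all
  ultimately show ?thesis
    by linarith
qed

lemma integral_poisson_exp_le:
  assumes "p \<le> q" "finite B" and c: "\<And>M. M \<in> {p..q} - B \<Longrightarrow> 0 \<le> c M \<and> c M \<le> 1"
    and int: "(\<lambda>M. c M * poisson_exp x \<epsilon> M) integrable_on {p..q}"
    and d: "0 < d" "\<And>M. M \<in> {p..q} \<Longrightarrow> d \<le> \<bar>x - exp M\<bar>"
  shows "integral {p..q} (\<lambda>M. c M * poisson_exp x \<epsilon> M) \<le> (q - p) * (exp q / d\<^sup>2)"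
proof -
  have "integral {p..q} (\<lambda>M. c M * poisson_exp x \<epsilon> M) \<le> integral {p..q} (\<lambda>M. exp q / d\<^sup>2)"
  proof (rule integral_le_except_finite[OF int _ \<open>finite B\<close>])
    fix M assume M: "M \<in> {p..q} - B"
    have "d\<^sup>2 \<le> (x - exp M)\<^sup>2 + \<epsilon>\<^sup>2"
      using power_mono[OF d(2)[of M], of 2] M d(1) by (simp add: add_increasing2)
    moreover have "0 < d\<^sup>2"
      using d(1) by simp
    ultimately have "0 < (x - exp M)\<^sup>2 + \<epsilon>\<^sup>2" "0 < d\<^sup>2" "d\<^sup>2 \<le> (x - exp M)\<^sup>2 + \<epsilon>\<^sup>2"
      by linarith+
    then have "poisson_exp x \<epsilon> M \<le> exp M / d\<^sup>2"
      unfolding poisson_exp_def by (intro divide_left_mono mult_pos_pos) (assumption | simp)+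
    also have "\<dots> \<le> exp q / d\<^sup>2"
      using M by (intro divide_right_mono) auto
    finally show "c M * poisson_exp x \<epsilon> M \<le> exp q / d\<^sup>2"
      using c[OF M] poisson_exp_nonneg[of x \<epsilon> M] by (meson mult_left_le_one_le order_trans)
  qed (rule integrable_const_ivl)
  also have "\<dots> = (q - p) * (exp q / d\<^sup>2)"
    using \<open>p \<le> q\<close> by simp
  finally show ?thesis .
qed

lemma integral_poisson_exp_ge:
  assumes "p \<le> r1" "r1 < r2" "r2 \<le> q" "finite B"
    and c: "\<And>M. M \<in> {p..q} - B \<Longrightarrow> 0 \<le> c M" and c_r: "\<And>M. M \<in> {r1<..<r2} \<Longrightarrow> c M = \<delta>"
    and "0 \<le> \<delta>" and x: "exp r1 \<le> x" "x \<le> exp r2" and \<epsilon>: "0 < \<epsilon>" "\<epsilon> \<le> 1"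
    and int: "(\<lambda>M. c M * poisson_exp x \<epsilon> M) integrable_on {p..q}"
  shows "\<delta> * arctan ((exp r2 - exp r1) / 2) \<le> \<epsilon> * integral {p..q} (\<lambda>M. c M * poisson_exp x \<epsilon> M)"
proof -
  let ?g = "\<lambda>M. \<epsilon> * poisson_exp x \<epsilon> M"
  have g: "(?g has_integral arctan ((exp r2 - x) / \<epsilon>) - arctan ((exp r1 - x) / \<epsilon>)) {r1..r2}"
    using poisson_exp_has_integral[of r1 r2 \<epsilon> x] assms by simp
  have sub: "{r1..r2} \<inter> {p..q} = {r1..r2}"
    using assms by auto
  have "\<delta> * arctan ((exp r2 - exp r1) / 2)
      \<le> \<delta> * (arctan ((exp r2 - x) / \<epsilon>) - arctan ((exp r1 - x) / \<epsilon>))"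
    using arctan_half_sum_le[of "exp r2 - x" "x - exp r1" \<epsilon>] assms
      arctan_minus[of "(x - exp r1) / \<epsilon>"]
    by (intro mult_left_mono) (auto simp: minus_divide_left)
  also have "\<dots> = integral {r1..r2} (\<lambda>M. \<delta> * ?g M)"
    by (rule integral_unique[symmetric]) (rule has_integral_mult_right[OF g])
  also have "\<dots> = integral {p..q} (\<lambda>M. if M \<in> {r1..r2} then \<delta> * ?g M else 0)"
    by (simp only: Henstock_Kurzweil_Integration.integral_restrict_Int sub)
  also have "\<dots> \<le> integral {p..q} (\<lambda>M. \<epsilon> * (c M * poisson_exp x \<epsilon> M))"
  proof (rule integral_le_except_finite[where B = "B \<union> {r1, r2}"])
    show "(\<lambda>M. if M \<in> {r1..r2} then \<delta> * ?g M else 0) integrable_on {p..q}"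
      unfolding integrable_restrict_Int sub using has_integral_mult_right[OF g, of \<delta>] by blast
    show "(\<lambda>M. \<epsilon> * (c M * poisson_exp x \<epsilon> M)) integrable_on {p..q}"
      using integrable_cmul[OF int, of \<epsilon>] by simp
    show "(if M \<in> {r1..r2} then \<delta> * ?g M else 0) \<le> \<epsilon> * (c M * poisson_exp x \<epsilon> M)"
      if "M \<in> {p..q} - (B \<union> {r1, r2})" for M
      using that c[of M] c_r[of M] \<epsilon> poisson_exp_nonneg[of x \<epsilon> M] by auto
  qed (simp add: \<open>finite B\<close>)
  finally show ?thesis
    by simp
qed

locale piecewise_linear =
  fixes n :: nat and Vpts \<beta> :: "nat \<Rightarrow> real" and Vf :: "real \<Rightarrow> real"
  assumes Vpts_mono: "\<forall>k<n. Vpts k < Vpts (Suc k)"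
    and beta_range: "\<forall>k\<in>{1..n}. \<beta> k \<in> {-1..1}"
    and Vf_lin: "\<forall>k\<in>{1..n}. \<forall>M\<in>{Vpts (k - 1)..Vpts k}.
                   Vf M = Vf (Vpts (k - 1)) + \<beta> k * (M - Vpts (k - 1))"
begin

abbreviation left_weight :: "real \<Rightarrow> real" where
  "left_weight M \<equiv> (1 + deriv Vf M) / 2"

abbreviation right_weight :: "real \<Rightarrow> real" where
  "right_weight M \<equiv> (1 - deriv Vf M) / 2"

abbreviation left_poisson_integral :: "real \<Rightarrow> real \<Rightarrow> real \<Rightarrow> real" where
  "left_poisson_integral \<tau> x \<epsilon> \<equiv> integral {Vpts 0..\<tau>} (\<lambda>M. left_weight M * poisson_exp x \<epsilon> M)"

abbreviation right_poisson_integral :: "real \<Rightarrow> real \<Rightarrow> real \<Rightarrow> real" where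
  "right_poisson_integral \<tau> x \<epsilon> \<equiv> integral {\<tau>..Vpts n} (\<lambda>M. right_weight M * poisson_exp x \<epsilon> M)"

lemma Vpts_le: "k \<le> m \<Longrightarrow> m \<le> n \<Longrightarrow> Vpts k \<le> Vpts m"
  by (rule lift_Suc_mono_le_ivl[of "{..<n}"]) (use Vpts_mono in \<open>auto intro: less_imp_le\<close>)

lemma Vpts_less: "k < m \<Longrightarrow> m \<le> n \<Longrightarrow> Vpts k < Vpts m"
  by (rule lift_Suc_mono_less_ivl[of "{..<n}"]) (use Vpts_mono in auto)

lemma deriv_Vf:
  assumes k: "k \<in> {1..n}" and M: "M \<in> {Vpts (k - 1)<..<Vpts k}"
  shows "deriv Vf M = \<beta> k"
proof -
  have "((\<lambda>M. Vf (Vpts (k - 1)) + \<beta> k * (M - Vpts (k - 1))) has_field_derivative \<beta> k) (at M)"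
    by (auto intro!: derivative_eq_intros)
  then have "(Vf has_field_derivative \<beta> k) (at M)"
  proof (rule has_field_derivative_transform_within_open[OF _ open_greaterThanLessThan M])
    fix x assume "x \<in> {Vpts (k - 1)<..<Vpts k}"
    then have "x \<in> {Vpts (k - 1)..Vpts k}"
      by simp
    then show "Vf (Vpts (k - 1)) + \<beta> k * (x - Vpts (k - 1)) = Vf x"
      using Vf_lin k by metis
  qed
  then show ?thesis
    by (rule DERIV_imp_deriv)
qed

lemma obtain_piece:
  assumes "M \<in> {Vpts 0..Vpts n} - Vpts ` {..n}"
  obtains k where "k \<in> {1..n}" "M \<in> {Vpts (k - 1)<..<Vpts k}"
proof -
  have M: "Vpts 0 < M" "M < Vpts n"
    using assms by (auto simp: order.order_iff_strict)
  define k where "k = (LEAST k. M < Vpts k)"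
  have "M < Vpts k" "k \<le> n"
    unfolding k_def by (auto intro: LeastI[of _ n] Least_le M)
  moreover have "k \<noteq> 0"
    using \<open>M < Vpts k\<close> M by (cases k) auto
  moreover have "Vpts (k - 1) < M"
  proof -
    have "\<not> M < Vpts (k - 1)"
      unfolding k_def by (rule not_less_Least) (use \<open>k \<noteq> 0\<close> in \<open>simp add: k_def\<close>)
    moreover have "Vpts (k - 1) \<noteq> M"
      using assms \<open>k \<le> n\<close> by auto
    ultimately show ?thesis by simp
  qed
  ultimately show ?thesis
    by (intro that[of k]) auto
qed

text \<open>
  At the breakpoints \<open>deriv Vf\<close> is an unspecified value, hence the finite exceptional sets here
  and in the estimates below.
\<close>

lemma weights_bounded:
  assumes "M \<in> {Vpts 0..Vpts n} - Vpts ` {..n}"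
  shows "0 \<le> left_weight M" "left_weight M \<le> 1" "0 \<le> right_weight M" "right_weight M \<le> 1"
proof -
  obtain k where "k \<in> {1..n}" "M \<in> {Vpts (k - 1)<..<Vpts k}"
    using obtain_piece[OF assms] .
  then have "deriv Vf M \<in> {-1..1}"
    using beta_range deriv_Vf by auto
  then show "0 \<le> left_weight M" "left_weight M \<le> 1" "0 \<le> right_weight M" "right_weight M \<le> 1"
    by auto
qed

lemma integral_DERIV_on_left:
  assumes j: "1 \<le> j" "j \<le> n" and tau: "\<tau> \<in> {Vpts (j - 1)<..<Vpts j}"
  shows "integral_DERIV_on {z. 0 < Im z} log_left log_left' left_weight (Vpts 0) \<tau>"
proof -
  define P where "P k = (if k < j then Vpts k else \<tau>)" for k
  have "integral_DERIV_on {z. 0 < Im z} log_left log_left' left_weight (P 0) (P j)"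
  proof (rule integral_DERIV_on_piecewise_const[where c = "\<lambda>k. (1 + \<beta> (Suc k)) / 2"])
    show "P k \<le> P (Suc k)" if "k < j" for k
    proof (cases "Suc k < j")
      case False
      then have "k = j - 1"
        using that by simp
      then show ?thesis
        using that tau by (simp add: P_def)
    qed (use that j Vpts_le[of k "Suc k"] in \<open>simp add: P_def\<close>)
    show "left_weight M = (1 + \<beta> (Suc k)) / 2" if "k < j" "M \<in> {P k<..<P (Suc k)}" for k M
    proof -
      have "Suc k < j \<or> Suc k = j"
        using that(1) by linarith
      then have "M \<in> {Vpts k<..<Vpts (Suc k)}"
        using that tau by (elim disjE) (auto simp: P_def)
      then show ?thesis
        using deriv_Vf[of "Suc k" M] that(1) j by simp
    qed
  qed (use open_halfspace_Im_gt convex_halfspace_Im_gt continuous_on_log_left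
         continuous_on_log_left' log_left_has_field_derivative in auto)
  then show ?thesis
    using j by (simp add: P_def)
qed

lemma integral_DERIV_on_right:
  assumes j: "1 \<le> j" "j \<le> n" and tau: "\<tau> \<in> {Vpts (j - 1)<..<Vpts j}"
  shows "integral_DERIV_on {z. 0 < Im z} log_right log_right' right_weight \<tau> (Vpts n)"
proof -
  define P where "P k = (if k = 0 then \<tau> else Vpts (j - 1 + k))" for k
  have "integral_DERIV_on {z. 0 < Im z} log_right log_right' right_weight (P 0) (P (Suc (n - j)))"
  proof (rule integral_DERIV_on_piecewise_const[where c = "\<lambda>k. (1 - \<beta> (j + k)) / 2"])
    show "P k \<le> P (Suc k)" if "k < Suc (n - j)" for k
      using that tau j Vpts_le[of "j - 1 + k" "j + k"] by (auto simp: P_def)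
    show "right_weight M = (1 - \<beta> (j + k)) / 2"
      if "k < Suc (n - j)" "M \<in> {P k<..<P (Suc k)}" for k M
    proof -
      have "M \<in> {Vpts (j + k - 1)<..<Vpts (j + k)}"
        using that tau j by (auto simp: P_def split: if_splits)
      then show ?thesis
        using deriv_Vf[of "j + k" M] that(1) j by simp
    qed
  qed (use open_halfspace_Im_gt convex_halfspace_Im_gt continuous_on_log_right
         continuous_on_log_right' log_right_has_field_derivative in auto)
  then show ?thesis
    using j by (simp add: P_def)
qed

lemma S_fun_has_field_derivative:
  assumes j: "1 \<le> j" "j \<le> n" and tau: "\<tau> \<in> {Vpts (j - 1)<..<Vpts j}" and w: "0 < Im w"
  shows "(S_fun Vpts n Vf \<tau> chi has_field_derivative
      integral {Vpts 0..\<tau>} (\<lambda>M. of_real (left_weight M) * log_left' w M)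
    - integral {\<tau>..Vpts n} (\<lambda>M. of_real (right_weight M) * log_right' w M)
    - of_real (chi - Vf \<tau> / 2) * inverse w) (at w)"
proof -
  have "S_fun Vpts n Vf \<tau> chi = (\<lambda>z.
      integral {Vpts 0..\<tau>} (\<lambda>M. of_real (left_weight M) * log_left z M)
    - integral {\<tau>..Vpts n} (\<lambda>M. of_real (right_weight M) * log_right z M)
    - of_real (chi - Vf \<tau> / 2) * Ln z)"
    by (simp add: fun_eq_iff S_fun_def log_left_def log_right_def)
  moreover have "(Ln has_field_derivative inverse w) (at w)"
    by (rule has_field_derivative_Ln) (use w in \<open>auto simp: complex_nonpos_Reals_iff\<close>)
  ultimately show ?thesis
    using integral_DERIV_on_left[OF j tau] integral_DERIV_on_right[OF j tau] w
    unfolding integral_DERIV_on_def by (auto intro!: DERIV_diff DERIV_cmult)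
qed

lemma Im_mult_deriv_S_fun:
  assumes j: "1 \<le> j" "j \<le> n" and tau: "\<tau> \<in> {Vpts (j - 1)<..<Vpts j}" and "0 < \<epsilon>"
  shows "(\<lambda>M. left_weight M * poisson_exp x \<epsilon> M) integrable_on {Vpts 0..\<tau>}"
    and "(\<lambda>M. right_weight M * poisson_exp x \<epsilon> M) integrable_on {\<tau>..Vpts n}"
    and "Im (Complex x \<epsilon> * deriv (S_fun Vpts n Vf \<tau> chi) (Complex x \<epsilon>)) =
      \<epsilon> * right_poisson_integral \<tau> x \<epsilon> - \<epsilon> * left_poisson_integral \<tau> x \<epsilon>"
proof -
  define w where "w = Complex x \<epsilon>"
  have w: "0 < Im w" "w \<noteq> 0"
    using \<open>0 < \<epsilon>\<close> by (auto simp: w_def complex_eq_iff)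
  define I1 where "I1 = integral {Vpts 0..\<tau>} (\<lambda>M. of_real (left_weight M) * log_left' w M)"
  define I2 where "I2 = integral {\<tau>..Vpts n} (\<lambda>M. of_real (right_weight M) * log_right' w M)"
  have "((\<lambda>M. of_real (left_weight M) * log_left' w M) has_integral I1) {Vpts 0..\<tau>}"
    using integral_DERIV_on_left[OF j tau] w unfolding integral_DERIV_on_def I1_def
    by (blast intro: integrable_integral)
  from has_integral_Im_mult[OF this Im_mult_log_left'[OF \<open>0 < \<epsilon>\<close>, of x, folded w_def]] have I1:
    "((\<lambda>M. left_weight M * poisson_exp x \<epsilon> M) has_integral - Im (w * I1) / \<epsilon>) {Vpts 0..\<tau>}"
    using \<open>0 < \<epsilon>\<close> by simp
  have "((\<lambda>M. of_real (right_weight M) * log_right' w M) has_integral I2) {\<tau>..Vpts n}"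
    using integral_DERIV_on_right[OF j tau] w unfolding integral_DERIV_on_def I2_def
    by (blast intro: integrable_integral)
  from has_integral_Im_mult[OF this Im_mult_log_right'[of x \<epsilon>, folded w_def]] have I2:
    "((\<lambda>M. right_weight M * poisson_exp x \<epsilon> M) has_integral - Im (w * I2) / \<epsilon>) {\<tau>..Vpts n}"
    using \<open>0 < \<epsilon>\<close> by simp
  show "(\<lambda>M. left_weight M * poisson_exp x \<epsilon> M) integrable_on {Vpts 0..\<tau>}"
    "(\<lambda>M. right_weight M * poisson_exp x \<epsilon> M) integrable_on {\<tau>..Vpts n}"
    using I1 I2 by blast+
  have "deriv (S_fun Vpts n Vf \<tau> chi) w = I1 - I2 - of_real (chi - Vf \<tau> / 2) * inverse w"
    unfolding I1_def I2_def by (rule DERIV_imp_deriv[OF S_fun_has_field_derivative[OF j tau w(1)]])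
  then have "w * deriv (S_fun Vpts n Vf \<tau> chi) w = w * I1 - w * I2 - of_real (chi - Vf \<tau> / 2)"
    using w(2) by (simp add: right_diff_distrib field_simps)
  then have "Im (w * deriv (S_fun Vpts n Vf \<tau> chi) w) = Im (w * I1) - Im (w * I2)"
    by simp
  moreover have "\<epsilon> * left_poisson_integral \<tau> x \<epsilon> = - Im (w * I1)"
    "\<epsilon> * right_poisson_integral \<tau> x \<epsilon> = - Im (w * I2)"
    using integral_unique[OF I1] integral_unique[OF I2] \<open>0 < \<epsilon>\<close> by simp_all
  ultimately show "Im (Complex x \<epsilon> * deriv (S_fun Vpts n Vf \<tau> chi) (Complex x \<epsilon>)) =
      \<epsilon> * right_poisson_integral \<tau> x \<epsilon> - \<epsilon> * left_poisson_integral \<tau> x \<epsilon>"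
    unfolding w_def[symmetric] by linarith
qed

lemma tau_mem_range:
  assumes "1 \<le> j" "j \<le> n" and "\<tau> \<in> {Vpts (j - 1)<..<Vpts j}"
  shows "\<tau> \<in> {Vpts 0..Vpts n}"
  using assms Vpts_le[of 0 "j - 1"] Vpts_le[of j n] by force

lemma left_poisson_integral_lower_bound:
  assumes j: "1 \<le> j" "j \<le> n" and tau: "\<tau> \<in> {Vpts (j - 1)<..<Vpts j}"
    and i: "1 \<le> i" "i < j" and "\<beta> i \<noteq> -1"
    and x: "exp (Vpts (i - 1)) \<le> x" "x \<le> exp (Vpts i)" and \<epsilon>: "0 < \<epsilon>" "\<epsilon> \<le> 1"
  shows "(1 + \<beta> i) / 2 * arctan ((exp (Vpts i) - exp (Vpts (i - 1))) / 2)
    \<le> \<epsilon> * left_poisson_integral \<tau> x \<epsilon>"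
proof (rule integral_poisson_exp_ge[where B = "Vpts ` {..n}", OF _ _ _ _ _ _ _ x \<epsilon>
      Im_mult_deriv_S_fun(1)[OF j tau \<epsilon>(1)]])
  show "Vpts 0 \<le> Vpts (i - 1)" "Vpts (i - 1) < Vpts i"
    using i j by (auto intro: Vpts_le Vpts_less)
  have "Vpts i \<le> Vpts (j - 1)"
    using i j by (intro Vpts_le) auto
  then show "Vpts i \<le> \<tau>"
    using tau by simp
  show "0 \<le> left_weight M" if "M \<in> {Vpts 0..\<tau>} - Vpts ` {..n}" for M
    using weights_bounded(1)[of M] that tau_mem_range[OF j tau] by auto
  show "left_weight M = (1 + \<beta> i) / 2" if "M \<in> {Vpts (i - 1)<..<Vpts i}" for M
    using deriv_Vf[OF _ that] i j by simp
  show "0 \<le> (1 + \<beta> i) / 2"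
    using bspec[OF beta_range, of i] i j by simp
qed simp

lemma right_poisson_integral_lower_bound:
  assumes j: "1 \<le> j" "j \<le> n" and tau: "\<tau> \<in> {Vpts (j - 1)<..<Vpts j}"
    and i: "j < i" "i \<le> n" and "\<beta> i \<noteq> 1"
    and x: "exp (Vpts (i - 1)) \<le> x" "x \<le> exp (Vpts i)" and \<epsilon>: "0 < \<epsilon>" "\<epsilon> \<le> 1"
  shows "(1 - \<beta> i) / 2 * arctan ((exp (Vpts i) - exp (Vpts (i - 1))) / 2)
    \<le> \<epsilon> * right_poisson_integral \<tau> x \<epsilon>"
proof (rule integral_poisson_exp_ge[where B = "Vpts ` {..n}", OF _ _ _ _ _ _ _ x \<epsilon>
      Im_mult_deriv_S_fun(2)[OF j tau \<epsilon>(1)]])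
  show "Vpts (i - 1) < Vpts i" "Vpts i \<le> Vpts n"
    using i j by (auto intro: Vpts_le Vpts_less)
  have "Vpts j \<le> Vpts (i - 1)"
    using i j by (intro Vpts_le) auto
  then show "\<tau> \<le> Vpts (i - 1)"
    using tau by simp
  show "0 \<le> right_weight M" if "M \<in> {\<tau>..Vpts n} - Vpts ` {..n}" for M
    using weights_bounded(3)[of M] that tau_mem_range[OF j tau] by auto
  show "right_weight M = (1 - \<beta> i) / 2" if "M \<in> {Vpts (i - 1)<..<Vpts i}" for M
    using deriv_Vf[OF _ that] i j by simp
  show "0 \<le> (1 - \<beta> i) / 2"
    using bspec[OF beta_range, of i] i j by simp
qed simp

lemma left_poisson_integral_upper_bound:
  assumes j: "1 \<le> j" "j \<le> n" and tau: "\<tau> \<in> {Vpts (j - 1)<..<Vpts j}"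
    and "exp \<tau> < x" "0 < \<epsilon>"
  shows "left_poisson_integral \<tau> x \<epsilon> \<le> (\<tau> - Vpts 0) * (exp \<tau> / (x - exp \<tau>)\<^sup>2)"
proof (rule integral_poisson_exp_le[where B = "Vpts ` {..n}", OF _ _ _
      Im_mult_deriv_S_fun(1)[OF j tau \<open>0 < \<epsilon>\<close>]])
  show "0 \<le> left_weight M \<and> left_weight M \<le> 1" if "M \<in> {Vpts 0..\<tau>} - Vpts ` {..n}" for M
    using weights_bounded(1,2)[of M] that tau_mem_range[OF j tau] by auto
  show "x - exp \<tau> \<le> \<bar>x - exp M\<bar>" if "M \<in> {Vpts 0..\<tau>}" for M
  proof -
    have "exp M \<le> exp \<tau>"
      using that by simp
    then show ?thesis
      using abs_ge_self[of "x - exp M"] by linarith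
  qed
qed (use tau_mem_range[OF j tau] \<open>exp \<tau> < x\<close> in auto)

lemma right_poisson_integral_upper_bound:
  assumes j: "1 \<le> j" "j \<le> n" and tau: "\<tau> \<in> {Vpts (j - 1)<..<Vpts j}"
    and "x < exp \<tau>" "0 < \<epsilon>"
  shows "right_poisson_integral \<tau> x \<epsilon> \<le> (Vpts n - \<tau>) * (exp (Vpts n) / (exp \<tau> - x)\<^sup>2)"
proof (rule integral_poisson_exp_le[where B = "Vpts ` {..n}", OF _ _ _
      Im_mult_deriv_S_fun(2)[OF j tau \<open>0 < \<epsilon>\<close>]])
  show "0 \<le> right_weight M \<and> right_weight M \<le> 1" if "M \<in> {\<tau>..Vpts n} - Vpts ` {..n}" for M
    using weights_bounded(3,4)[of M] that tau_mem_range[OF j tau] by auto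
  show "exp \<tau> - x \<le> \<bar>x - exp M\<bar>" if "M \<in> {\<tau>..Vpts n}" for M
  proof -
    have "exp \<tau> \<le> exp M"
      using that by simp
    then show ?thesis
      using abs_ge_minus_self[of "x - exp M"] by linarith
  qed
qed (use tau_mem_range[OF j tau] \<open>x < exp \<tau>\<close> in auto)

lemma Im_mult_deriv_S_fun_bounded_below:
  assumes j: "1 \<le> j" "j \<le> n" and tau: "\<tau> \<in> {Vpts (j - 1)<..<Vpts j}"
    and i: "1 \<le> i" "i \<le> n" "i \<noteq> j" and beta_i: "\<beta> i \<noteq> 1" "\<beta> i \<noteq> -1"
    and x: "exp (Vpts (i - 1)) \<le> x" "x \<le> exp (Vpts i)"
  obtains \<eta> C where "0 < \<eta>"
    "\<And>\<epsilon>. 0 < \<epsilon> \<Longrightarrow> \<epsilon> \<le> 1 \<Longrightarrow>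
       \<eta> - \<epsilon> * C \<le> \<bar>Im (Complex x \<epsilon> * deriv (S_fun Vpts n Vf \<tau> chi) (Complex x \<epsilon>))\<bar>"
proof -
  define A where "A = arctan ((exp (Vpts i) - exp (Vpts (i - 1))) / 2)"
  have "0 < A"
    using Vpts_less[of "i - 1" i] i arctan_less_iff[of 0] by (simp add: A_def)
  have "\<beta> i \<in> {-1<..<1}"
    using beta_range beta_i i by force
  consider "i < j" | "j < i"
    using i by linarith
  then show ?thesis
  proof cases
    case 1
    have "Vpts i \<le> Vpts (j - 1)"
      using 1 j by (intro Vpts_le) auto
    then have "exp (Vpts i) < exp \<tau>"
      using tau by simp
    then have "x < exp \<tau>"
      using x(2) by linarith
    show ?thesis
    proof (rule that[of "(1 + \<beta> i) / 2 * A" "(Vpts n - \<tau>) * (exp (Vpts n) / (exp \<tau> - x)\<^sup>2)"])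
      show "0 < (1 + \<beta> i) / 2 * A"
        using \<open>\<beta> i \<in> {-1<..<1}\<close> \<open>0 < A\<close> by simp
      fix \<epsilon> :: real assume \<epsilon>: "0 < \<epsilon>" "\<epsilon> \<le> 1"
      show "(1 + \<beta> i) / 2 * A - \<epsilon> * ((Vpts n - \<tau>) * (exp (Vpts n) / (exp \<tau> - x)\<^sup>2))
          \<le> \<bar>Im (Complex x \<epsilon> * deriv (S_fun Vpts n Vf \<tau> chi) (Complex x \<epsilon>))\<bar>"
        using left_poisson_integral_lower_bound[OF j tau i(1) 1 beta_i(2) x \<epsilon>, folded A_def]
          mult_left_mono[OF right_poisson_integral_upper_bound[OF j tau \<open>x < exp \<tau>\<close> \<epsilon>(1)],
            of \<epsilon>]
          Im_mult_deriv_S_fun(3)[OF j tau \<epsilon>(1), of x chi] \<epsilon>(1) by linarith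
    qed
  next
    case 2
    have "Vpts j \<le> Vpts (i - 1)"
      using 2 i by (intro Vpts_le) auto
    then have "exp \<tau> < exp (Vpts (i - 1))"
      using tau by simp
    then have "exp \<tau> < x"
      using x(1) by linarith
    show ?thesis
    proof (rule that[of "(1 - \<beta> i) / 2 * A" "(\<tau> - Vpts 0) * (exp \<tau> / (x - exp \<tau>)\<^sup>2)"])
      show "0 < (1 - \<beta> i) / 2 * A"
        using \<open>\<beta> i \<in> {-1<..<1}\<close> \<open>0 < A\<close> by simp
      fix \<epsilon> :: real assume \<epsilon>: "0 < \<epsilon>" "\<epsilon> \<le> 1"
      show "(1 - \<beta> i) / 2 * A - \<epsilon> * ((\<tau> - Vpts 0) * (exp \<tau> / (x - exp \<tau>)\<^sup>2))
          \<le> \<bar>Im (Complex x \<epsilon> * deriv (S_fun Vpts n Vf \<tau> chi) (Complex x \<epsilon>))\<bar>"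
        using right_poisson_integral_lower_bound[OF j tau 2 i(2) beta_i(1) x \<epsilon>, folded A_def]
          mult_left_mono[OF left_poisson_integral_upper_bound[OF j tau \<open>exp \<tau> < x\<close> \<epsilon>(1)],
            of \<epsilon>]
          Im_mult_deriv_S_fun(3)[OF j tau \<epsilon>(1), of x chi] \<epsilon>(1) by linarith
    qed
  qed
qed

end

lemma filterlim_Complex_at_right_0:
  "filterlim (\<lambda>\<epsilon>. Complex x \<epsilon>) (at (of_real x) within (UNIV - \<real>)) (at_right 0)"
proof (rule filterlim_at_withinI)
  have "((\<lambda>\<epsilon>. Complex x \<epsilon>) \<longlongrightarrow> Complex x 0) (at_right 0)"
    by (intro tendsto_Complex tendsto_const tendsto_ident_at)
  then show "((\<lambda>\<epsilon>. Complex x \<epsilon>) \<longlongrightarrow> of_real x) (at_right 0)"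
    by (simp add: complex_of_real_def)
  show "\<forall>\<^sub>F \<epsilon> in at_right 0. Complex x \<epsilon> \<in> UNIV - \<real> - {of_real x}"
    by (rule eventually_mono[OF eventually_at_right_less]) (auto simp: complex_is_Real_iff)
qed

theorem lemma2p1:
  fixes n i j :: nat and Vpts \<beta> :: "nat \<Rightarrow> real" and Vf :: "real \<Rightarrow> real" and \<tau> chi :: real
  assumes Vpts_mono: "\<forall>k<n. Vpts k < Vpts (Suc k)"
    and beta_range: "\<forall>k\<in>{1..n}. \<beta> k \<in> {-1..1}"
    and beta_distinct: "\<forall>k\<le>n. beta_ext \<beta> n k \<noteq> beta_ext \<beta> n (Suc k)"
    and Vf_cont: "continuous_on {Vpts 0..Vpts n} Vf"
    and Vf_lin: "\<forall>k\<in>{1..n}. \<forall>M\<in>{Vpts (k - 1)..Vpts k}.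
                   Vf M = Vf (Vpts (k - 1)) + \<beta> k * (M - Vpts (k - 1))"
    and j: "1 \<le> j" "j \<le> n"
    and tau: "\<tau> \<in> {Vpts (j - 1)<..<Vpts j}"
    and i: "1 \<le> i" "i \<le> n" "i \<noteq> j"
    and beta_i: "\<beta> i \<noteq> 1" "\<beta> i \<noteq> -1"
  shows "\<not> (\<exists>z0\<in>{exp (Vpts (i - 1))..exp (Vpts i)}.
            ((\<lambda>z. z * deriv (S_fun Vpts n Vf \<tau> chi) z) \<longlongrightarrow> 0)
              (at (complex_of_real z0) within (UNIV - \<real>)))"
proof
  assume "\<exists>z0\<in>{exp (Vpts (i - 1))..exp (Vpts i)}.
            ((\<lambda>z. z * deriv (S_fun Vpts n Vf \<tau> chi) z) \<longlongrightarrow> 0)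
              (at (complex_of_real z0) within (UNIV - \<real>))"
  then obtain x where x: "exp (Vpts (i - 1)) \<le> x" "x \<le> exp (Vpts i)"
    and lim: "((\<lambda>z. z * deriv (S_fun Vpts n Vf \<tau> chi) z) \<longlongrightarrow> 0) (at (of_real x) within (UNIV - \<real>))"
    by auto
  interpret piecewise_linear n Vpts \<beta> Vf
    using Vpts_mono beta_range Vf_lin by unfold_locales
  obtain \<eta> C where "0 < \<eta>" and bound: "\<And>\<epsilon>. 0 < \<epsilon> \<Longrightarrow> \<epsilon> \<le> 1 \<Longrightarrow>
      \<eta> - \<epsilon> * C \<le> \<bar>Im (Complex x \<epsilon> * deriv (S_fun Vpts n Vf \<tau> chi) (Complex x \<epsilon>))\<bar>"
    using Im_mult_deriv_S_fun_bounded_below[OF j tau i beta_i x] by blast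
  let ?T = "\<lambda>\<epsilon>. Im (Complex x \<epsilon> * deriv (S_fun Vpts n Vf \<tau> chi) (Complex x \<epsilon>))"
  have "(?T \<longlongrightarrow> 0) (at_right 0)"
    using tendsto_Im[OF filterlim_compose[OF lim filterlim_Complex_at_right_0]] by simp
  then have "((\<lambda>\<epsilon>. \<bar>?T \<epsilon>\<bar> + \<epsilon> * C) \<longlongrightarrow> 0) (at_right 0)"
    by (intro tendsto_add_zero tendsto_rabs_zero tendsto_mult_left_zero tendsto_ident_at)
  moreover have "\<forall>\<^sub>F \<epsilon> in at_right 0. \<eta> \<le> \<bar>?T \<epsilon>\<bar> + \<epsilon> * C"
    unfolding eventually_at_right_field using bound by (intro exI[of _ 1]) force
  ultimately have "\<eta> \<le> 0"
    by (intro tendsto_lowerbound) auto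
  then show False
    using \<open>0 < \<eta>\<close> by simp
qed

end
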